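(* Let $f_\infty:(0,\infty)\to\mathbb{R}$ be defined by $f_\infty(x)=(x^2-1)^2+\frac{(x^2+1)^2}{x}(x^2-1)\left(\arctan(x)-\frac{\pi}{2}\right)$. Then $f_\infty(x)=0$ only for $x=1$, $f_\infty(x)>0$ for $x\in(0,1)$, and $f_\infty(x)<0$ for all $x>1$. *)

theory Defs
  imports Complex_Main
begin

definition f_inf :: "real \<Rightarrow> real" where
  "f_inf x = (x^2 - 1)^2 + ((x^2 + 1)^2 / x) * (x^2 - 1) * (arctan x - pi / 2)"

end

theory Submission
  imports Defs
begin

text \<open>
  Since \<open>f_inf x = (x\<^sup>2 - 1) \<cdot> (x\<^sup>2 - 1 + (x\<^sup>2 + 1)\<^sup>2 / x \<cdot> (arctan x - \<pi>/2))\<close>,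
  it suffices that the second factor is negative on \<open>(0, \<infinity>)\<close>. With
  \<open>arctan x - \<pi>/2 = - arctan (1/x)\<close> this follows from the elementary bound
  \<open>arctan t > t / (1 + t\<^sup>2)\<close> for \<open>t > 0\<close>, which makes the second factor less than
  \<open>(x\<^sup>2 - 1) - (x\<^sup>2 + 1) = -2\<close>.
\<close>

lemma has_real_derivative_arctan_minus_div:
  fixes s :: real
  shows "((\<lambda>t. arctan t - t / (1 + t\<^sup>2)) has_real_derivative 2 * s\<^sup>2 / (1 + s\<^sup>2)\<^sup>2) (at s)"
proof -
  have nz: "1 + s\<^sup>2 \<noteq> 0"
    by (metis add_pos_nonneg zero_le_power2 zero_less_one less_irrefl)
  have quotient_diff: "inverse q - (q - a) / q\<^sup>2 = a / q\<^sup>2" if "q \<noteq> 0" for q a :: real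
    using that by (simp add: field_simps power2_eq_square)
  have "((\<lambda>t. arctan t - t / (1 + t\<^sup>2)) has_real_derivative
          inverse (1 + s\<^sup>2) - ((1 + s\<^sup>2) - 2 * s\<^sup>2) / (1 + s\<^sup>2)\<^sup>2) (at s)"
    using nz by (auto intro!: derivative_eq_intros simp: power2_eq_square)
  then show ?thesis
    unfolding quotient_diff[OF nz] .
qed

lemma arctan_gt_div:
  fixes t :: real
  assumes "t > 0"
  shows "t / (1 + t\<^sup>2) < arctan t"
proof -
  let ?g = "\<lambda>t::real. arctan t - t / (1 + t\<^sup>2)"
  have "?g 0 < ?g t"
  proof (rule DERIV_pos_imp_increasing_open[OF \<open>t > 0\<close>])
    fix s :: real
    assume "0 < s"
    then show "\<exists>y. DERIV ?g s :> y \<and> y > 0"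
      using has_real_derivative_arctan_minus_div[of s]
      by (intro exI[of _ "2 * s\<^sup>2 / (1 + s\<^sup>2)\<^sup>2"] conjI)
        (auto intro!: divide_pos_pos zero_less_power add_pos_nonneg)
  next
    show "continuous_on {0..t} ?g"
      by (intro continuous_at_imp_continuous_on ballI
            DERIV_isCont[OF has_real_derivative_arctan_minus_div])
  qed
  then show ?thesis by simp
qed

lemma arctan_minus_pi_half_lt:
  fixes x :: real
  assumes "x > 0"
  shows "arctan x - pi / 2 < - x / (x\<^sup>2 + 1)"
proof -
  have "x / (x\<^sup>2 + 1) = (1 / x) / (1 + (1 / x)\<^sup>2)"
    using assms by (simp add: field_simps power2_eq_square)
  also have "\<dots> < arctan (1 / x)"
    using assms by (intro arctan_gt_div) simp
  also have "arctan (1 / x) = pi / 2 - arctan x"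
    using arctan_inverse[of x] assms by simp
  finally show ?thesis by simp
qed

lemma f_inf_cofactor_neg:
  fixes x :: real
  assumes "x > 0"
  shows "x\<^sup>2 - 1 + (x\<^sup>2 + 1)\<^sup>2 / x * (arctan x - pi / 2) < 0"
proof -
  have "x\<^sup>2 + 1 > 0"
    by (simp add: add_nonneg_pos)
  with assms have pos: "(x\<^sup>2 + 1)\<^sup>2 / x > 0"
    by simp
  have "(x\<^sup>2 + 1)\<^sup>2 / x * (arctan x - pi / 2) < (x\<^sup>2 + 1)\<^sup>2 / x * (- x / (x\<^sup>2 + 1))"
    using mult_strict_left_mono[OF arctan_minus_pi_half_lt[OF assms] pos] .
  also have "\<dots> = - (x\<^sup>2 + 1)"
    using assms \<open>x\<^sup>2 + 1 > 0\<close> by (simp add: power2_eq_square)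
  finally show ?thesis by simp
qed

lemma f_inf_factor:
  "f_inf x = (x\<^sup>2 - 1) * (x\<^sup>2 - 1 + (x\<^sup>2 + 1)\<^sup>2 / x * (arctan x - pi / 2))"
  unfolding f_inf_def by (simp add: distrib_left power2_eq_square)

theorem lemma3p3:
  shows "(\<forall>x::real. x > 0 \<longrightarrow> (f_inf x = 0 \<longleftrightarrow> x = 1))
    \<and> (\<forall>x::real. 0 < x \<and> x < 1 \<longrightarrow> f_inf x > 0)
    \<and> (\<forall>x::real. x > 1 \<longrightarrow> f_inf x < 0)"
proof (intro conjI allI impI)
  fix x :: real
  assume "x > 0"
  with f_inf_cofactor_neg have "x\<^sup>2 - 1 = 0 \<longleftrightarrow> f_inf x = 0"
    by (fastforce simp: f_inf_factor)
  with \<open>x > 0\<close> show "f_inf x = 0 \<longleftrightarrow> x = 1"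
    by (simp add: power2_eq_1_iff)
next
  fix x :: real
  assume "0 < x \<and> x < 1"
  then have "x\<^sup>2 < 1"
    by (simp add: power_less_one_iff)
  with \<open>0 < x \<and> x < 1\<close> show "f_inf x > 0"
    using f_inf_cofactor_neg[of x] by (simp add: f_inf_factor mult_neg_neg)
next
  fix x :: real
  assume "x > 1"
  then have "x\<^sup>2 > 1"
    by (simp add: one_less_power)
  with \<open>x > 1\<close> show "f_inf x < 0"
    using f_inf_cofactor_neg[of x] by (simp add: f_inf_factor mult_pos_neg)
qed

end
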